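(* Let $k\ge 3$, $1\le s\le k-1$, $m\ge 1$, $n=m(k-s)\ge 2k-s$, and let $G$ be the $k$-uniform $s$-cycle with vertex set $\mathbb{Z}_n$ and edges $e_j=\{1+j(k-s),\ldots,s+(j+1)(k-s)\}$ (labels modulo $n$), $j=0,\ldots,m-1$. Then $G$ is regular if and only if $k=q(k-s)$ for some positive integer $q$. In this case every vertex of $G$ has degree $q$.
   Context: A $k$-uniform $s$-cycle with $m$ edges has vertex set $\mathbb{Z}_n$, $n=m(k-s)$ (vertex $n+i$ identified with $i$), and edge set $\{e_0,\ldots,e_{m-1}\}$ with $e_j=\{j(k-s)+1,\ldots,j(k-s)+k\}$; throughout the paper it is assumed that $n\ge 2k-s$. The degree of a vertex is the number of edges containing it; the hypergraph is regular if all degrees are equal. *)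

theory Defs
  imports Main
begin

text \<open>k-uniform s-cycle with m edges on vertex set Z_n, n = m(k-s),
  vertices represented by 0..n-1 (labels taken mod n).
  Edge e_j = {j(k-s)+1, ..., j(k-s)+k} mod n.\<close>

definition scycle_edge :: "nat \<Rightarrow> nat \<Rightarrow> nat \<Rightarrow> nat \<Rightarrow> nat set" where
  "scycle_edge k s m j = (\<lambda>i. (j * (k - s) + i) mod (m * (k - s))) ` {1..k}"

definition scycle_edges :: "nat \<Rightarrow> nat \<Rightarrow> nat \<Rightarrow> nat set set" where
  "scycle_edges k s m = scycle_edge k s m ` {..<m}"

definition scycle_vertices :: "nat \<Rightarrow> nat \<Rightarrow> nat \<Rightarrow> nat set" where
  "scycle_vertices k s m = {..<m * (k - s)}"

definition scycle_degree :: "nat \<Rightarrow> nat \<Rightarrow> nat \<Rightarrow> nat \<Rightarrow> nat" where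
  "scycle_degree k s m v = card {e \<in> scycle_edges k s m. v \<in> e}"

definition scycle_regular :: "nat \<Rightarrow> nat \<Rightarrow> nat \<Rightarrow> bool" where
  "scycle_regular k s m \<longleftrightarrow>
     (\<forall>u \<in> scycle_vertices k s m. \<forall>v \<in> scycle_vertices k s m.
        scycle_degree k s m u = scycle_degree k s m v)"

end

theory Submission
  imports Defs "HOL-Number_Theory.Cong"
begin

text \<open>Each edge is a cyclic interval of k consecutive vertices of Z_n, n = m d with d = k - s,
  starting just after a multiple of d. Since k < n the m edges are distinct, so double counting
  incidences shows that the degrees sum to m k. If G is regular of degree c this reads m d c = m k,
  i.e. k = c d. Conversely, let k = q d. The position (v - j d - 1) mod n of a vertex v in the
  interval after j d is congruent to v - 1 modulo d and differs for different j; at most q such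
  positions are below k = q d, so every degree is at most q, and as the degrees sum to m k = n q,
  they all equal q.\<close>

definition cyc_interval :: "nat \<Rightarrow> nat \<Rightarrow> nat \<Rightarrow> nat set" where
  "cyc_interval n a k = (\<lambda>i. (a + i) mod n) ` {1..k}"

lemma cyc_interval_subset: "0 < n \<Longrightarrow> cyc_interval n a k \<subseteq> {..<n}"
  unfolding cyc_interval_def by auto

lemma mem_cyc_interval_iff:
  assumes "0 < n"
  shows "x \<in> cyc_interval n a k \<longleftrightarrow> x < n \<and> (int x - int a - 1) mod int n < int k"
proof
  assume "x \<in> cyc_interval n a k"
  then obtain i where i: "1 \<le> i" "i \<le> k" and x: "x = (a + i) mod n"
    unfolding cyc_interval_def by auto
  have "(int x - int a - 1) mod int n = (int i - 1) mod int n"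
    unfolding x by (simp add: zmod_int diff_diff_eq mod_simps)
  also have "\<dots> \<le> int i - 1"
    using i assms by (intro zmod_le_nonneg_dividend) auto
  finally show "x < n \<and> (int x - int a - 1) mod int n < int k"
    using i assms x by auto
next
  assume x: "x < n \<and> (int x - int a - 1) mod int n < int k"
  define i where "i = nat ((int x - int a - 1) mod int n) + 1"
  have "int i = (int x - int a - 1) mod int n + 1"
    using assms by (simp add: i_def)
  then have "int ((a + i) mod n) = (int a + 1 + (int x - int a - 1) mod int n) mod int n"
    by (simp add: zmod_int ac_simps)
  also have "\<dots> = int x"
    using x by (simp add: mod_simps)
  finally have "x = (a + i) mod n"
    by (simp only: of_nat_eq_iff)
  moreover have "i \<in> {1..k}"
  proof -
    have "0 \<le> (int x - int a - 1) mod int n"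
      using assms by simp
    then have "nat ((int x - int a - 1) mod int n) < k"
      using x by (simp add: nat_less_iff)
    then show ?thesis
      by (simp add: i_def)
  qed
  ultimately show "x \<in> cyc_interval n a k"
    unfolding cyc_interval_def by blast
qed

lemma card_cyc_interval:
  assumes "k \<le> n"
  shows "card (cyc_interval n a k) = k"
proof -
  have "inj_on (\<lambda>i. (a + i) mod n) {1..k}"
  proof
    fix i i' assume i: "i \<in> {1..k}" and i': "i' \<in> {1..k}"
      and "(a + i) mod n = (a + i') mod n"
    then have "[a + i = a + i'] (mod n)"
      by (simp only: cong_def)
    then have "[i = i'] (mod n)"
      by (simp only: cong_add_lcancel_nat)
    then have "[i - 1 = i' - 1] (mod n)"
      using i i' by (auto intro: cong_diff_nat)
    moreover have "i - 1 < n" "i' - 1 < n"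
      using i i' assms by auto
    ultimately have "i - 1 = i' - 1"
      by (rule cong_less_modulus_unique_nat)
    then show "i = i'"
      using i i' by auto
  qed
  then show ?thesis
    unfolding cyc_interval_def by (simp add: card_image)
qed

text \<open>The interval after a starts at a + 1 and, as k < n, misses a itself; this pins down a
  modulo n.\<close>

lemma cyc_interval_eq_imp_cong:
  assumes "0 < k" "k < n" and eq: "cyc_interval n a k = cyc_interval n b k"
  shows "[a = b] (mod n)"
proof -
  have n: "0 < n" using assms by simp
  have "(a + 1) mod n \<in> cyc_interval n a k"
    using assms unfolding cyc_interval_def by force
  then have first: "(int a - int b) mod int n < int k"
    using eq n by (simp add: mem_cyc_interval_iff zmod_int diff_diff_eq mod_simps)
  have "a mod n \<notin> cyc_interval n a k"
    using n \<open>k < n\<close> by (simp add: mem_cyc_interval_iff zmod_int diff_diff_eq mod_simps zmod_minus1)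
  then have before: "\<not> (int a - int b - 1) mod int n < int k"
    using eq n by (simp add: mem_cyc_interval_iff zmod_int diff_diff_eq mod_simps)
  have "(int a - int b) mod int n = 0"
  proof (rule ccontr)
    define r where "r = (int a - int b) mod int n"
    assume "(int a - int b) mod int n \<noteq> 0"
    moreover have "0 \<le> r" "r < int n"
      using n by (simp_all add: r_def)
    ultimately have r: "0 < r" "r < int n"
      by (simp_all add: r_def)
    have "(int a - int b - 1) mod int n = (r - 1) mod int n"
      by (simp add: r_def mod_diff_left_eq)
    also have "\<dots> = r - 1"
      using r by (intro mod_pos_pos_trivial) auto
    finally show False
      using first before r_def by linarith
  qed
  then have "[int a = int b] (mod int n)"
    by (simp add: cong_iff_dvd_diff mod_eq_0_iff_dvd)
  then show ?thesis
    by (simp add: cong_int_iff)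
qed

lemma cong_mult_right_less_imp_eq:
  fixes j j' d m :: nat
  assumes "[j * d = j' * d] (mod m * d)" "j < m" "j' < m" "0 < d"
  shows "j = j'"
proof -
  have "j * d < m * d" "j' * d < m * d"
    using assms by simp_all
  with assms(1) have "j * d = j' * d"
    by (rule cong_less_modulus_unique_nat)
  then show ?thesis
    using \<open>0 < d\<close> by simp
qed

lemma card_mem_cyc_interval_multiples_le:
  fixes d m q v :: nat
  assumes "0 < d"
  shows "card {j \<in> {..<m}. v \<in> cyc_interval (m * d) (j * d) (q * d)} \<le> q"
proof (cases "m = 0")
  case False
  define n where "n = m * d"
  have n: "0 < n"
    using False assms by (simp add: n_def)
  define A where "A = {j \<in> {..<m}. v \<in> cyc_interval n (j * d) (q * d)}"
  define off where "off j = (int v - int (j * d) - 1) mod int n" for j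
  have off_bounds: "0 \<le> off j" "off j < int q * int d" if "j \<in> A" for j
    using that n by (auto simp: A_def off_def mem_cyc_interval_iff)
  have off_mod: "off j mod int d = (int v - 1) mod int d" for j
  proof -
    have "int d dvd int n"
      by (simp add: n_def)
    then have "off j mod int d = (int v - 1 - int j * int d) mod int d"
      by (simp add: off_def mod_mod_cancel algebra_simps)
    also have "\<dots> = (int v - 1) mod int d"
      by (simp add: mod_eq_dvd_iff)
    finally show ?thesis .
  qed
  have "0 \<le> off j div int d" "off j div int d < int q" if "j \<in> A" for j
  proof -
    show "0 \<le> off j div int d"
      using off_bounds(1)[OF that] assms by (simp add: pos_imp_zdiv_nonneg_iff)
    have "int d * (off j div int d) \<le> off j"
      using assms mult_div_mod_eq[of "int d" "off j"] pos_mod_sign[of "int d" "off j"] by linarith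
    then have "int d * (off j div int d) < int d * int q"
      using off_bounds(2)[OF that] by (simp add: mult.commute)
    then show "off j div int d < int q"
      by (simp add: mult_less_cancel_left)
  qed
  then have "(\<lambda>j. off j div int d) ` A \<subseteq> {0..<int q}"
    by auto
  moreover have "inj_on (\<lambda>j. off j div int d) A"
  proof
    fix j j' assume j: "j \<in> A" and j': "j' \<in> A" and "off j div int d = off j' div int d"
    then have "off j = off j'"
      using off_mod by (metis div_mult_mod_eq)
    then have "[int (j * d) = int (j' * d)] (mod int n)"
      by (simp add: off_def cong_iff_dvd_diff mod_eq_dvd_iff dvd_diff_commute)
    then have "[j * d = j' * d] (mod m * d)"
      by (simp only: n_def cong_int_iff)
    moreover have "j < m" "j' < m"
      using j j' by (simp_all add: A_def)
    ultimately show "j = j'"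
      using assms by (rule cong_mult_right_less_imp_eq)
  qed
  ultimately have "card A \<le> card {0..<int q}"
    by (intro card_inj_on_le) auto
  then show ?thesis
    by (simp add: A_def n_def)
qed simp

lemma sum_card_filter_swap:
  assumes "finite A" "finite B"
  shows "(\<Sum>x\<in>A. card {y \<in> B. R x y}) = (\<Sum>y\<in>B. card {x \<in> A. R x y})"
  using sum.swap_restrict[OF assms, of "\<lambda>_ _. 1 :: nat" R] by simp

lemma scycle_edge_eq_cyc_interval:
  "scycle_edge k s m j = cyc_interval (m * (k - s)) (j * (k - s)) k"
  by (simp add: scycle_edge_def cyc_interval_def)

lemma inj_on_scycle_edge:
  assumes "k < m * (k - s)"
  shows "inj_on (scycle_edge k s m) {..<m}"
proof
  fix j j' assume j: "j \<in> {..<m}" and j': "j' \<in> {..<m}"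
    and "scycle_edge k s m j = scycle_edge k s m j'"
  moreover have "0 < k - s"
    using assms by (cases "k - s") simp_all
  moreover have "0 < k"
    using \<open>0 < k - s\<close> by simp
  ultimately have "[j * (k - s) = j' * (k - s)] (mod m * (k - s))"
    using assms by (intro cyc_interval_eq_imp_cong) (simp_all add: scycle_edge_eq_cyc_interval)
  then show "j = j'"
    using j j' \<open>0 < k - s\<close> cong_mult_right_less_imp_eq by simp
qed

lemma scycle_degree_eq_card_indices:
  assumes "k < m * (k - s)"
  shows "scycle_degree k s m v = card {j \<in> {..<m}. v \<in> scycle_edge k s m j}"
proof -
  have "{e \<in> scycle_edges k s m. v \<in> e} = scycle_edge k s m ` {j \<in> {..<m}. v \<in> scycle_edge k s m j}"
    unfolding scycle_edges_def by auto
  moreover have "inj_on (scycle_edge k s m) {j \<in> {..<m}. v \<in> scycle_edge k s m j}"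
    using inj_on_scycle_edge[OF assms] by (rule inj_on_subset) auto
  ultimately show ?thesis
    unfolding scycle_degree_def by (simp add: card_image)
qed

lemma sum_scycle_degree:
  assumes "k < m * (k - s)"
  shows "(\<Sum>v\<in>scycle_vertices k s m. scycle_degree k s m v) = m * k"
proof -
  let ?n = "m * (k - s)"
  have "(\<Sum>v\<in>scycle_vertices k s m. scycle_degree k s m v)
      = (\<Sum>v<?n. card {j \<in> {..<m}. v \<in> scycle_edge k s m j})"
    using assms by (simp add: scycle_vertices_def scycle_degree_eq_card_indices)
  also have "\<dots> = (\<Sum>j<m. card {v \<in> {..<?n}. v \<in> scycle_edge k s m j})"
    by (rule sum_card_filter_swap) auto
  also have "\<dots> = (\<Sum>j<m. card (scycle_edge k s m j))"
  proof (rule sum.cong)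
    fix j
    have "0 < ?n"
      using assms by linarith
    then have "scycle_edge k s m j \<subseteq> {..<?n}"
      by (simp add: scycle_edge_eq_cyc_interval cyc_interval_subset)
    then have "{v \<in> {..<?n}. v \<in> scycle_edge k s m j} = scycle_edge k s m j"
      by blast
    then show "card {v \<in> {..<?n}. v \<in> scycle_edge k s m j} = card (scycle_edge k s m j)"
      by simp
  qed (rule refl)
  also have "\<dots> = m * k"
  proof -
    have "card (scycle_edge k s m j) = k" for j
      unfolding scycle_edge_eq_cyc_interval using assms by (rule card_cyc_interval[OF less_imp_le])
    then show ?thesis
      by simp
  qed
  finally show ?thesis .
qed

lemma scycle_degree_le:
  assumes "k < m * (k - s)" "k = q * (k - s)"
  shows "scycle_degree k s m v \<le> q"
proof -
  have "0 < k - s"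
    using assms(1) by (cases "k - s") simp_all
  then have "card {j \<in> {..<m}. v \<in> cyc_interval (m * (k - s)) (j * (k - s)) (q * (k - s))} \<le> q"
    by (rule card_mem_cyc_interval_multiples_le)
  then show ?thesis
    using assms by (simp add: scycle_degree_eq_card_indices scycle_edge_eq_cyc_interval)
qed

lemma scycle_degree_eq_quotient:
  assumes "k < m * (k - s)" "k = q * (k - s)" "v \<in> scycle_vertices k s m"
  shows "scycle_degree k s m v = q"
proof (rule ccontr)
  assume "scycle_degree k s m v \<noteq> q"
  then have "scycle_degree k s m v < q"
    using scycle_degree_le[OF assms(1,2)] by (simp add: order_less_le)
  then have "(\<Sum>u\<in>scycle_vertices k s m. scycle_degree k s m u) < (\<Sum>u\<in>scycle_vertices k s m. q)"
    using assms(3) scycle_degree_le[OF assms(1,2)]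
    by (intro sum_strict_mono_ex1) (auto simp: scycle_vertices_def)
  also have "\<dots> = m * k"
    using assms(2) by (simp add: scycle_vertices_def ac_simps)
  finally show False
    by (simp add: sum_scycle_degree[OF assms(1)])
qed

lemma scycle_regular_imp_quotient:
  assumes "k < m * (k - s)" "scycle_regular k s m"
  shows "\<exists>q>0. k = q * (k - s)"
proof -
  have "0 < m * (k - s)"
    using assms(1) by linarith
  then have 0: "0 \<in> scycle_vertices k s m"
    by (simp add: scycle_vertices_def)
  define c where "c = scycle_degree k s m 0"
  have "scycle_degree k s m v = c" if "v \<in> scycle_vertices k s m" for v
    using assms(2) 0 that unfolding scycle_regular_def c_def by blast
  then have "(\<Sum>v\<in>scycle_vertices k s m. scycle_degree k s m v) = m * (k - s) * c"
    by (simp add: scycle_vertices_def)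
  then have "m * k = m * (k - s) * c"
    by (simp add: sum_scycle_degree[OF assms(1)])
  then have "k = c * (k - s)"
    using \<open>0 < m * (k - s)\<close> by (simp add: mult.commute)
  moreover have "0 < c"
    using assms(1) calculation by (cases c) auto
  ultimately show ?thesis
    by blast
qed

theorem proposition3p1:
  fixes k s m :: nat
  assumes "k \<ge> 3" and "1 \<le> s" and "s \<le> k - 1" and "m \<ge> 1"
    and "m * (k - s) \<ge> 2 * k - s"
  shows "(scycle_regular k s m \<longleftrightarrow> (\<exists>q::nat. q > 0 \<and> k = q * (k - s)))
       \<and> (\<forall>q::nat. q > 0 \<and> k = q * (k - s) \<longrightarrow>
            (\<forall>v \<in> scycle_vertices k s m. scycle_degree k s m v = q))"
proof -
  have long: "k < m * (k - s)"
    using assms by linarith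
  have degree: "\<forall>v \<in> scycle_vertices k s m. scycle_degree k s m v = q"
    if "k = q * (k - s)" for q
    using scycle_degree_eq_quotient[OF long that] by blast
  have "scycle_regular k s m \<longleftrightarrow> (\<exists>q::nat. q > 0 \<and> k = q * (k - s))"
  proof
    assume "\<exists>q. q > 0 \<and> k = q * (k - s)"
    then obtain q where "k = q * (k - s)"
      by blast
    then show "scycle_regular k s m"
      using degree unfolding scycle_regular_def by metis
  qed (rule scycle_regular_imp_quotient[OF long])
  then show ?thesis
    using degree by blast
qed

end
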